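(* Let $\mu$ and $\lambda$ be constants, and let $r_\mu:=1/\sqrt{-\mu}$ if $\mu<0$ and $r_\mu:=+\infty$ if $\mu\ge 0$. On the ball $\mathbb{B}^n(r_\mu)=\{x\in\mathbb{R}^n:|x|<r_\mu\}$ consider the Riemannian metric $$\bar\alpha=\frac{\sqrt{(1+\mu|x|^2)|y|^2-\mu\langle x,y\rangle^2}}{(1+\mu|x|^2)^{3/4}}$$ and the $1$-form $$\bar\beta=\frac{\lambda\langle x,y\rangle}{(1+\mu|x|^2)^{5/4}}.$$ Then $\bar\alpha$ is dually flat on $\mathbb{B}^n(r_\mu)$, and $\bar\beta$ is dually related with respect to $\bar\alpha$.
   Context: $|\cdot|$ and $\langle\cdot,\cdot\rangle$ are the Euclidean norm and inner product; standard coordinates $x=(x^i)$, $y=(y^i)$ are used. A Riemannian metric $\alpha=\sqrt{a_{ij}(x)y^iy^j}$ on an open set $U\subseteq\mathbb{R}^n$ is dually flat if $[\alpha^2]_{x^ky^l}y^k-2[\alpha^2]_{x^l}=0$; equivalently its spray coefficients $G^i=\frac12\Gamma^i{}_{jk}y^jy^k$ satisfy $G^i=2\theta\,y^i+\alpha^2\theta^i$ for some $1$-form $\theta=\theta_iy^i$ on $U$, where $\theta^i:=a^{ij}\theta_j$ (this $\theta$ is uniquely determined by $G^i$). Given such a dually flat $\alpha$ with this $\theta$, a $1$-form $\beta=b_iy^i$ on $U$ is called dually related with respect to $\alpha$ if $b_{i|j}=2\theta_ib_j+c(x)a_{ij}$ for some scalar function $c(x)$ on $U$, where $b_{i|j}$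 denotes the covariant derivative of $\beta$ with respect to $\alpha$. *)

theory Defs
  imports "HOL-Analysis.Analysis"
begin

text \<open>A Riemannian metric
  alpha = sqrt(a_ij(x) y^i y^j) is given by its coefficient matrix a :: real^'n \<Rightarrow> real^'n^'n,
  a 1-form beta = b_i(x) y^i by its coefficient vector b :: real^'n \<Rightarrow> real^'n.\<close>

definition pdx :: "(real^'n \<Rightarrow> real^'n \<Rightarrow> real) \<Rightarrow> 'n \<Rightarrow> real^'n \<Rightarrow> real^'n \<Rightarrow> real" where
  "pdx G k x y = frechet_derivative (\<lambda>z. G z y) (at x) (axis k 1)"

definition pdy :: "(real^'n \<Rightarrow> real^'n \<Rightarrow> real) \<Rightarrow> 'n \<Rightarrow> real^'n \<Rightarrow> real^'n \<Rightarrow> real" where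
  "pdy G l x y = frechet_derivative (\<lambda>w. G x w) (at y) (axis l 1)"

definition pd :: "(real^'n \<Rightarrow> real) \<Rightarrow> 'n \<Rightarrow> real^'n \<Rightarrow> real" where
  "pd f k x = frechet_derivative f (at x) (axis k 1)"

definition alpha_sq :: "(real^'n \<Rightarrow> real^'n^'n) \<Rightarrow> real^'n \<Rightarrow> real^'n \<Rightarrow> real" where
  "alpha_sq a x y = y \<bullet> (a x *v y)"

definition riemannian_metric_on :: "(real^'n) set \<Rightarrow> (real^'n \<Rightarrow> real^'n^'n) \<Rightarrow> bool" where
  "riemannian_metric_on U a \<longleftrightarrow> open U \<and>
     (\<forall>x\<in>U. (\<forall>i j. a x $ i $ j = a x $ j $ i) \<and>
             (\<forall>y. y \<noteq> 0 \<longrightarrow> alpha_sq a x y > 0) \<and>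
             (\<forall>i j. (\<lambda>z. a z $ i $ j) differentiable (at x)))"

definition dually_flat_on :: "(real^'n) set \<Rightarrow> (real^'n \<Rightarrow> real^'n^'n) \<Rightarrow> bool" where
  "dually_flat_on U a \<longleftrightarrow> riemannian_metric_on U a \<and>
     (\<forall>x\<in>U. \<forall>y. \<forall>l.
        (\<Sum>k\<in>UNIV. pdx (pdy (alpha_sq a) l) k x y * y $ k) - 2 * pdx (alpha_sq a) l x y = 0)"

definition inv_metric :: "(real^'n \<Rightarrow> real^'n^'n) \<Rightarrow> real^'n \<Rightarrow> real^'n^'n" where
  "inv_metric a x = matrix_inv (a x)"

definition christoffel :: "(real^'n \<Rightarrow> real^'n^'n) \<Rightarrow> 'n \<Rightarrow> 'n \<Rightarrow> 'n \<Rightarrow> real^'n \<Rightarrow> real" where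
  "christoffel a i j k x = (1/2) * (\<Sum>l\<in>UNIV. inv_metric a x $ i $ l *
      (pd (\<lambda>z. a z $ l $ k) j x + pd (\<lambda>z. a z $ l $ j) k x - pd (\<lambda>z. a z $ j $ k) l x))"

definition spray :: "(real^'n \<Rightarrow> real^'n^'n) \<Rightarrow> 'n \<Rightarrow> real^'n \<Rightarrow> real^'n \<Rightarrow> real" where
  "spray a i x y = (1/2) * (\<Sum>j\<in>UNIV. \<Sum>k\<in>UNIV. christoffel a i j k x * y $ j * y $ k)"

definition spray_form :: "(real^'n) set \<Rightarrow> (real^'n \<Rightarrow> real^'n^'n) \<Rightarrow> (real^'n \<Rightarrow> real^'n) \<Rightarrow> bool" where
  "spray_form U a \<theta> \<longleftrightarrow> (\<forall>x\<in>U. \<forall>y. \<forall>i.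
     spray a i x y = 2 * (\<theta> x \<bullet> y) * y $ i + alpha_sq a x y * (inv_metric a x *v \<theta> x) $ i)"

definition cov_deriv :: "(real^'n \<Rightarrow> real^'n^'n) \<Rightarrow> (real^'n \<Rightarrow> real^'n) \<Rightarrow> 'n \<Rightarrow> 'n \<Rightarrow> real^'n \<Rightarrow> real" where
  "cov_deriv a b i j x = pd (\<lambda>z. b z $ i) j x - (\<Sum>k\<in>UNIV. b x $ k * christoffel a k i j x)"

definition dually_related_on :: "(real^'n) set \<Rightarrow> (real^'n \<Rightarrow> real^'n^'n) \<Rightarrow> (real^'n \<Rightarrow> real^'n) \<Rightarrow> bool" where
  "dually_related_on U a b \<longleftrightarrow> dually_flat_on U a \<and>
     (\<forall>x\<in>U. \<forall>i. (\<lambda>z. b z $ i) differentiable (at x)) \<and>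
     (\<exists>\<theta> c. spray_form U a \<theta> \<and>
        (\<forall>x\<in>U. \<forall>i j. cov_deriv a b i j x = 2 * \<theta> x $ i * b x $ j + c x * a x $ i $ j))"

definition ball_mu :: "real \<Rightarrow> (real^'n) set" where
  "ball_mu \<mu> = (if \<mu> < 0 then ball 0 (1 / sqrt (- \<mu>)) else UNIV)"

end

theory Submission
  imports Defs
begin

text \<open>Write \<open>\<phi> = 1 + \<mu>|x|\<^sup>2\<close> and \<open>\<rho> = \<phi>\<^sup>1\<^sup>/\<^sup>4\<close>. The coefficient matrix of \<open>\<alpha>\<close> is
  \<open>a\<^sub>i\<^sub>j = (\<phi> \<delta>\<^sub>i\<^sub>j - \<mu> x\<^sub>i x\<^sub>j) / \<rho>\<^sup>6\<close>, with inverse \<open>\<rho>\<^sup>2 (\<delta>\<^sub>i\<^sub>j + \<mu> x\<^sub>i x\<^sub>j)\<close>, and its first derivatives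
  \<open>\<partial>\<^sub>k a\<^sub>i\<^sub>j = c\<^sub>1 (\<delta>\<^sub>i\<^sub>j x\<^sub>k + \<delta>\<^sub>j\<^sub>k x\<^sub>i + \<delta>\<^sub>k\<^sub>i x\<^sub>j) + c\<^sub>3 x\<^sub>i x\<^sub>j x\<^sub>k\<close> form a totally symmetric tensor.
  For any metric with totally symmetric first derivatives the dual flatness condition holds
  identically and the Christoffel symbols reduce to \<open>\<Gamma>\<^sup>i\<^sub>j\<^sub>k = \<onehalf> a\<^sup>i\<^sup>l \<partial>\<^sub>k a\<^sub>l\<^sub>j\<close>. With this the spray of
  \<open>\<alpha>\<close> is computed in closed form, giving \<open>\<theta> = -\<mu> x / (4\<phi>)\<close>, and the covariant derivative of
  \<open>\<beta>\<close> is \<open>2 \<theta>\<^sub>i b\<^sub>j + c a\<^sub>i\<^sub>j\<close> with \<open>c = \<lambda> (1 + \<phi>) / (2 \<rho>\<^sup>3)\<close>.\<close>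

lemma if_zero_times_simps:
  fixes a b g :: real
  shows "(if P then 1 else 0) * g = (if P then g else 0)" "g * (if P then 1 else 0) = (if P then g else 0)"
    "a * (if P then b else 0) = (if P then a * b else 0)" "(if P then b else 0) * a = (if P then b * a else 0)"
    "(if P then b else 0) / a = (if P then b / a else 0)"
    "(\<Sum>k\<in>S. if P then f k else 0) = (if P then (\<Sum>k\<in>S. f k) else 0)"
  by auto

lemmas index_sum_simps = algebra_simps sum.distrib sum_distrib_left sum_distrib_right inner_vec_def
  power2_eq_square if_zero_times_simps sum.delta sum.delta' sum_product sum_subtractf

lemma symmetric_matrix_eqI:
  fixes M N :: "real^'n^'n"
  assumes "\<And>i j. M $ i $ j = M $ j $ i" and "\<And>i j. N $ i $ j = N $ j $ i"
    and "\<And>y. y \<bullet> (M *v y) = y \<bullet> (N *v y)"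
  shows "M = N"
proof -
  have form_axis2: "(axis i 1 + axis j 1) \<bullet> (A *v (axis i 1 + axis j 1)) = A$i$i + A$j$j + A$i$j + A$j$i"
    and form_axis: "axis i 1 \<bullet> (A *v axis i 1) = A$i$i" for A :: "real^'n^'n" and i j
    by (simp_all add: matrix_vector_mult_def axis_def index_sum_simps)
  have "M$i$j = N$i$j" for i j
    using assms(3)[of "axis i 1 + axis j 1"] assms(3)[of "axis i 1"] assms(3)[of "axis j 1"] assms(1,2)[of i j]
    unfolding form_axis2 form_axis by simp
  then show ?thesis by (simp add: vec_eq_iff)
qed

lemma matrix_inv_eqI:
  fixes A B :: "'a::field^'n^'n"
  assumes "A ** B = mat 1"
  shows "matrix_inv A = B"
proof -
  have inverse: "A ** B = mat 1 \<and> B ** A = mat 1"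
    using assms matrix_left_right_inverse by blast
  then have "A ** matrix_inv A = mat 1 \<and> matrix_inv A ** A = mat 1"
    unfolding matrix_inv_def by (rule someI)
  then have "matrix_inv A = matrix_inv A ** (A ** B)"
    using inverse by (simp add: matrix_mul_rid)
  also have "\<dots> = B"
    using \<open>A ** matrix_inv A = mat 1 \<and> matrix_inv A ** A = mat 1\<close>
    by (simp add: matrix_mul_assoc matrix_mul_lid)
  finally show ?thesis .
qed

section \<open>Metrics with totally symmetric first derivatives\<close>

lemma alpha_sq_eq_sum: "alpha_sq a x y = (\<Sum>i\<in>UNIV. \<Sum>m\<in>UNIV. y $ i * a x $ i $ m * y $ m)"
  by (simp add: alpha_sq_def matrix_vector_mult_def inner_vec_def sum_distrib_left mult_ac)

lemma pdy_alpha_sq: "pdy (alpha_sq a) l x y = (\<Sum>m\<in>UNIV. (a x $ l $ m + a x $ m $ l) * y $ m)"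
proof -
  have "((\<lambda>w. w \<bullet> (a x *v w)) has_derivative (\<lambda>h. y \<bullet> (a x *v h) + h \<bullet> (a x *v y))) (at y)"
    by (rule has_derivative_inner[OF has_derivative_ident
          bounded_linear_imp_has_derivative[OF matrix_vector_mul_bounded_linear]])
  then have "pdy (alpha_sq a) l x y = y \<bullet> (a x *v axis l 1) + axis l 1 \<bullet> (a x *v y)"
    unfolding pdy_def alpha_sq_def by (simp add: frechet_derivative_at[symmetric])
  also have "\<dots> = (\<Sum>m\<in>UNIV. (a x $ l $ m + a x $ m $ l) * y $ m)"
    by (simp add: matrix_vector_mult_def axis_def index_sum_simps)
  finally show ?thesis .
qed

lemma pdx_pdy_alpha_sq:
  assumes "\<And>l m. (\<lambda>z. a z $ l $ m) differentiable (at x)"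
  shows "pdx (pdy (alpha_sq a) l) k x y = (\<Sum>m\<in>UNIV. (pd (\<lambda>z. a z $ l $ m) k x + pd (\<lambda>z. a z $ m $ l) k x) * y $ m)"
proof -
  let ?D = "\<lambda>l m. frechet_derivative (\<lambda>z. a z $ l $ m) (at x)"
  have "((\<lambda>z. \<Sum>m\<in>UNIV. (a z $ l $ m + a z $ m $ l) * y $ m) has_derivative
      (\<lambda>h. \<Sum>m\<in>UNIV. (?D l m h + ?D m l h) * y $ m)) (at x)"
    using assms frechet_derivative_works
    by (intro has_derivative_sum has_derivative_mult_left has_derivative_add) blast+
  then show ?thesis
    unfolding pdx_def pdy_alpha_sq pd_def by (simp add: frechet_derivative_at[symmetric])
qed

lemma pdx_alpha_sq:
  assumes "\<And>l m. (\<lambda>z. a z $ l $ m) differentiable (at x)"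
  shows "pdx (alpha_sq a) l x y = (\<Sum>i\<in>UNIV. \<Sum>m\<in>UNIV. y $ i * pd (\<lambda>z. a z $ i $ m) l x * y $ m)"
proof -
  let ?D = "\<lambda>i m. frechet_derivative (\<lambda>z. a z $ i $ m) (at x)"
  have "((\<lambda>z. \<Sum>i\<in>UNIV. \<Sum>m\<in>UNIV. y $ i * a z $ i $ m * y $ m) has_derivative
      (\<lambda>h. \<Sum>i\<in>UNIV. \<Sum>m\<in>UNIV. y $ i * ?D i m h * y $ m)) (at x)"
    using assms frechet_derivative_works
    by (intro has_derivative_sum has_derivative_mult_left has_derivative_mult_right) blast
  then show ?thesis
    unfolding pdx_def alpha_sq_eq_sum pd_def by (simp add: frechet_derivative_at[symmetric])
qed

lemma dually_flat_condition_if_totally_symmetric: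
  assumes diff: "\<And>l m. (\<lambda>z. a z $ l $ m) differentiable (at x)"
    and T: "\<And>l m k. pd (\<lambda>z. a z $ l $ m) k x = T l m k"
    and T_swap12: "\<And>l m k. T l m k = T m l k" and T_swap23: "\<And>l m k. T l m k = T l k m"
  shows "(\<Sum>k\<in>UNIV. pdx (pdy (alpha_sq a) l) k x y * y $ k) - 2 * pdx (alpha_sq a) l x y = 0"
proof -
  have "T i m l = T l i m" for i m by (metis T_swap12 T_swap23)
  then have "pdx (alpha_sq a) l x y = (\<Sum>i\<in>UNIV. \<Sum>m\<in>UNIV. T l i m * y $ i * y $ m)"
    unfolding pdx_alpha_sq[OF diff] T by (simp add: mult_ac)
  also have "\<dots> = (\<Sum>k\<in>UNIV. \<Sum>m\<in>UNIV. T l m k * y $ m * y $ k)"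
    by (subst sum.swap) (simp add: T_swap23[of l])
  finally show ?thesis
    unfolding pdx_pdy_alpha_sq[OF diff] T T_swap12[of _ l]
    by (simp add: sum_distrib_left algebra_simps)
qed

lemma christoffel_if_totally_symmetric:
  assumes T: "\<And>l m k. pd (\<lambda>z. a z $ l $ m) k x = T l m k"
    and T_swap12: "\<And>l m k. T l m k = T m l k" and T_swap23: "\<And>l m k. T l m k = T l k m"
  shows "christoffel a i j k x = 1/2 * (\<Sum>l\<in>UNIV. inv_metric a x $ i $ l * T l j k)"
proof -
  have "T l k j + T l j k - T j k l = T l j k" for l
    by (metis T_swap12 T_swap23 add_diff_cancel)
  then show ?thesis unfolding christoffel_def T by simp
qed

lemma spray_if_totally_symmetric:
  assumes T: "\<And>l m k. pd (\<lambda>z. a z $ l $ m) k x = T l m k"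
    and T_swap12: "\<And>l m k. T l m k = T m l k" and T_swap23: "\<And>l m k. T l m k = T l k m"
  shows "spray a i x y = 1/4 * (\<Sum>l\<in>UNIV. inv_metric a x $ i $ l * (\<Sum>j\<in>UNIV. \<Sum>k\<in>UNIV. T l j k * y $ j * y $ k))"
proof -
  have "spray a i x y = 1/4 * (\<Sum>j\<in>UNIV. \<Sum>k\<in>UNIV. \<Sum>l\<in>UNIV. inv_metric a x $ i $ l * (T l j k * y $ j * y $ k))"
    unfolding spray_def christoffel_if_totally_symmetric[OF assms]
    by (simp add: sum_distrib_left sum_distrib_right mult_ac)
  also have "\<dots> = 1/4 * (\<Sum>l\<in>UNIV. \<Sum>j\<in>UNIV. \<Sum>k\<in>UNIV. inv_metric a x $ i $ l * (T l j k * y $ j * y $ k))"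
    by (subst sum.swap, subst (2) sum.swap) simp
  finally show ?thesis by (simp add: sum_distrib_left)
qed

lemma cov_deriv_if_totally_symmetric:
  assumes T: "\<And>l m k. pd (\<lambda>z. a z $ l $ m) k x = T l m k"
    and T_swap12: "\<And>l m k. T l m k = T m l k" and T_swap23: "\<And>l m k. T l m k = T l k m"
  shows "cov_deriv a b i j x = pd (\<lambda>z. b z $ i) j x - 1/2 * (\<Sum>l\<in>UNIV. (b x v* inv_metric a x) $ l * T l i j)"
proof -
  have "(\<Sum>k\<in>UNIV. b x $ k * christoffel a k i j x) = 1/2 * (\<Sum>k\<in>UNIV. \<Sum>l\<in>UNIV. b x $ k * inv_metric a x $ k $ l * T l i j)"
    unfolding christoffel_if_totally_symmetric[OF assms] by (simp add: sum_distrib_left mult_ac)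
  also have "\<dots> = 1/2 * (\<Sum>l\<in>UNIV. (b x v* inv_metric a x) $ l * T l i j)"
    by (subst sum.swap) (simp add: vector_matrix_mult_def sum_distrib_left sum_distrib_right mult_ac)
  finally show ?thesis unfolding cov_deriv_def by simp
qed

section \<open>The metric \<open>\<alpha>\<close> and the 1-form \<open>\<beta>\<close> on the ball\<close>

definition cubic_tensor :: "real \<Rightarrow> real \<Rightarrow> real^'n \<Rightarrow> 'n \<Rightarrow> 'n \<Rightarrow> 'n \<Rightarrow> real" where
  "cubic_tensor c1 c3 x l m k =
     c1 * ((if l = m then x $ k else 0) + (if m = k then x $ l else 0) + (if k = l then x $ m else 0))
     + c3 * x $ l * x $ m * x $ k"

lemma cubic_tensor_swap12: "cubic_tensor c1 c3 x l m k = cubic_tensor c1 c3 x m l k"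
  and cubic_tensor_swap23: "cubic_tensor c1 c3 x l m k = cubic_tensor c1 c3 x l k m"
  by (auto simp: cubic_tensor_def algebra_simps)

lemma cubic_tensor_contract_yy:
  "(\<Sum>j\<in>UNIV. \<Sum>k\<in>UNIV. cubic_tensor c1 c3 x l j k * y $ j * y $ k)
     = c1 * (2 * (x \<bullet> y) * y $ l + (y \<bullet> y) * x $ l) + c3 * (x \<bullet> y)^2 * x $ l"
  by (simp add: cubic_tensor_def index_sum_simps)

lemma cubic_tensor_contract_x:
  "(\<Sum>l\<in>UNIV. x $ l * cubic_tensor c1 c3 x l i j)
     = 2 * c1 * x $ i * x $ j + c1 * (x \<bullet> x) * (if i = j then 1 else 0) + c3 * (x \<bullet> x) * x $ i * x $ j"
  by (simp add: cubic_tensor_def index_sum_simps)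

definition phi :: "real \<Rightarrow> real^'n \<Rightarrow> real" where
  "phi \<mu> x = 1 + \<mu> * (x \<bullet> x)"

definition rho :: "real \<Rightarrow> real^'n \<Rightarrow> real" where
  "rho \<mu> x = phi \<mu> x powr (1/4)"

text \<open>\<open>\<alpha>(x, y)\<^sup>2 = y \<bullet> (alpha_bar \<mu> x *v y)\<close>, using \<open>rho\<^sup>6 = phi\<^sup>3\<^sup>/\<^sup>2\<close>.\<close>
definition alpha_bar :: "real \<Rightarrow> real^'n \<Rightarrow> real^'n^'n" where
  "alpha_bar \<mu> x = (\<chi> i j. ((if i = j then phi \<mu> x else 0) - \<mu> * x $ i * x $ j) / rho \<mu> x ^ 6)"

definition alpha_bar_inv :: "real \<Rightarrow> real^'n \<Rightarrow> real^'n^'n" where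
  "alpha_bar_inv \<mu> x = (\<chi> i j. ((if i = j then 1 else 0) + \<mu> * x $ i * x $ j) * rho \<mu> x ^ 2)"

definition beta_bar :: "real \<Rightarrow> real \<Rightarrow> real^'n \<Rightarrow> real^'n" where
  "beta_bar \<mu> lam x = (lam / rho \<mu> x ^ 5) *\<^sub>R x"

definition theta_bar :: "real \<Rightarrow> real^'n \<Rightarrow> real^'n" where
  "theta_bar \<mu> x = (- \<mu> / (4 * phi \<mu> x)) *\<^sub>R x"

lemma open_ball_mu: "open (ball_mu \<mu>)"
  by (simp add: ball_mu_def)

lemma phi_pos:
  assumes "x \<in> ball_mu \<mu>"
  shows "phi \<mu> x > 0"
proof (cases "\<mu> < 0")
  case True
  then have "norm x ^ 2 < (1 / sqrt (-\<mu>))^2"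
    using assms by (simp add: ball_mu_def power_strict_mono)
  then have "(-\<mu>) * (x \<bullet> x) < 1"
    using True by (simp add: power2_norm_eq_inner power_divide field_simps)
  then show ?thesis by (simp add: phi_def)
next
  case False
  then show ?thesis by (simp add: phi_def add_pos_nonneg)
qed

lemma rho_pos: "phi \<mu> x > 0 \<Longrightarrow> rho \<mu> x > 0"
  by (simp add: rho_def)

lemma rho_pow: "phi \<mu> x > 0 \<Longrightarrow> rho \<mu> x ^ n = phi \<mu> x powr (n/4)"
  by (simp add: rho_def powr_realpow[symmetric] powr_powr)

lemma rho_pow4: "phi \<mu> x > 0 \<Longrightarrow> rho \<mu> x ^ 4 = phi \<mu> x"
  using rho_pow[of \<mu> x 4] by simp

lemma phi_quadratic_pos:
  assumes "phi \<mu> x > 0" and "y \<noteq> 0"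
  shows "0 < phi \<mu> x * (y \<bullet> y) - \<mu> * (x \<bullet> y)^2"
proof (cases "\<mu> \<ge> 0")
  case True
  have "\<mu> * (x \<bullet> y)^2 \<le> \<mu> * ((x \<bullet> x) * (y \<bullet> y))"
    using True Cauchy_Schwarz_ineq[of x y] by (rule mult_left_mono[rotated])
  moreover have "0 < y \<bullet> y" using \<open>y \<noteq> 0\<close> by simp
  moreover have "phi \<mu> x * (y \<bullet> y) - \<mu> * (x \<bullet> y)^2 = y \<bullet> y + (\<mu> * ((x \<bullet> x) * (y \<bullet> y)) - \<mu> * (x \<bullet> y)^2)"
    by (simp add: phi_def algebra_simps)
  ultimately show ?thesis by linarith
next
  case False
  then have "0 \<le> - \<mu> * (x \<bullet> y)^2" by (simp add: mult_nonpos_nonneg)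
  moreover have "0 < phi \<mu> x * (y \<bullet> y)" using assms by simp
  ultimately show ?thesis by simp
qed

lemma alpha_bar_quadratic_form:
  "y \<bullet> (alpha_bar \<mu> x *v y) = (phi \<mu> x * (y \<bullet> y) - \<mu> * (x \<bullet> y)^2) / rho \<mu> x ^ 6"
  by (simp add: alpha_bar_def matrix_vector_mult_def index_sum_simps diff_divide_distrib
      add_divide_distrib sum_divide_distrib)

lemma alpha_bar_unique:
  fixes a :: "real^'n \<Rightarrow> real^'n^'n"
  assumes phi: "phi \<mu> x > 0" and a_sym: "\<And>i j. a x $ i $ j = a x $ j $ i"
    and a_alpha: "\<And>y. sqrt (alpha_sq a x y) =
        sqrt ((1 + \<mu> * (norm x)\<^sup>2) * (norm y)\<^sup>2 - \<mu> * (x \<bullet> y)\<^sup>2) / (1 + \<mu> * (norm x)\<^sup>2) powr (3/4)"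
  shows "a x = alpha_bar \<mu> x"
proof (rule symmetric_matrix_eqI)
  show "a x $ i $ j = a x $ j $ i" for i j by (rule a_sym)
  show "alpha_bar \<mu> x $ i $ j = alpha_bar \<mu> x $ j $ i" for i j by (simp add: alpha_bar_def mult_ac)
  fix y :: "real^'n"
  let ?Q = "phi \<mu> x * (y \<bullet> y) - \<mu> * (x \<bullet> y)^2"
  have Q: "0 \<le> ?Q"
    using phi_quadratic_pos[OF phi, of y] by (cases "y = 0") auto
  have sqrt_eq: "sqrt (alpha_sq a x y) = sqrt ?Q / rho \<mu> x ^ 3"
    using a_alpha[of y] rho_pow[OF phi, of 3] by (simp add: power2_norm_eq_inner phi_def)
  then have "0 \<le> sqrt (alpha_sq a x y)"
    using Q rho_pos[OF phi] by simp
  then have "alpha_sq a x y = sqrt (alpha_sq a x y) ^ 2"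
    by simp
  also have "\<dots> = ?Q / rho \<mu> x ^ 6"
    using sqrt_eq Q by (simp add: power_divide flip: power_mult)
  finally show "y \<bullet> (a x *v y) = y \<bullet> (alpha_bar \<mu> x *v y)"
    by (simp add: alpha_sq_def alpha_bar_quadratic_form)
qed

lemma beta_bar_unique:
  assumes phi: "phi \<mu> x > 0"
    and b_beta: "\<And>y. b x \<bullet> y = lam * (x \<bullet> y) / (1 + \<mu> * (norm x)\<^sup>2) powr (5/4)"
  shows "b x = beta_bar \<mu> lam x"
  using b_beta[of "axis i 1" for i] rho_pow[OF phi, of 5]
  by (simp add: vec_eq_iff inner_axis beta_bar_def power2_norm_eq_inner phi_def)

lemma alpha_bar_mult_inv:
  assumes "phi \<mu> x > 0"
  shows "alpha_bar \<mu> x ** alpha_bar_inv \<mu> x = mat 1"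
proof -
  have rho: "rho \<mu> x ^ 2 / rho \<mu> x ^ 6 = 1 / phi \<mu> x"
    using rho_pos[OF assms] by (simp flip: rho_pow4[OF assms] add: field_simps)
  have "(alpha_bar \<mu> x ** alpha_bar_inv \<mu> x) $ i $ j = mat 1 $ i $ j" for i j
  proof -
    have product_sum: "(\<Sum>k\<in>UNIV. ((if i = k then phi \<mu> x else 0) - \<mu> * x$i * x$k) * ((if k = j then 1 else 0) + \<mu> * x$k * x$j))
        = (if i = j then phi \<mu> x else 0)"
      by (simp add: phi_def index_sum_simps)
    have "(alpha_bar \<mu> x ** alpha_bar_inv \<mu> x) $ i $ j
        = (\<Sum>k\<in>UNIV. ((if i = k then phi \<mu> x else 0) - \<mu> * x$i * x$k) * ((if k = j then 1 else 0) + \<mu> * x$k * x$j))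
          * (rho \<mu> x ^ 2 / rho \<mu> x ^ 6)"
      unfolding matrix_matrix_mult_def alpha_bar_def alpha_bar_inv_def sum_distrib_right
      by (simp, rule sum.cong, simp_all add: field_simps)
    also have "\<dots> = (if i = j then phi \<mu> x else 0) * (1 / phi \<mu> x)"
      unfolding product_sum rho ..
    finally show ?thesis using assms by (simp add: mat_def)
  qed
  then show ?thesis by (simp add: vec_eq_iff)
qed

lemma matrix_inv_alpha_bar: "phi \<mu> x > 0 \<Longrightarrow> matrix_inv (alpha_bar \<mu> x) = alpha_bar_inv \<mu> x"
  by (rule matrix_inv_eqI[OF alpha_bar_mult_inv])

lemma has_derivative_phi: "(phi \<mu> has_derivative (\<lambda>h. 2 * \<mu> * (x \<bullet> h))) (at x)"
  unfolding phi_def[abs_def]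
  by (rule has_derivative_eq_rhs, (rule derivative_intros)+, auto simp: inner_commute algebra_simps)

lemma has_derivative_rho:
  assumes "phi \<mu> x > 0"
  shows "(rho \<mu> has_derivative (\<lambda>h. rho \<mu> x * \<mu> * (x \<bullet> h) / (2 * phi \<mu> x))) (at x)"
  unfolding rho_def[abs_def]
  by (rule has_derivative_eq_rhs, rule has_derivative_powr[OF has_derivative_phi has_derivative_const assms])
    (auto simp: field_simps)

lemma has_derivative_rho_power:
  assumes "phi \<mu> x > 0"
  shows "((\<lambda>z. rho \<mu> z ^ n) has_derivative (\<lambda>h. n * \<mu> * (x \<bullet> h) / (2 * phi \<mu> x) * rho \<mu> x ^ n)) (at x)"
proof (rule has_derivative_eq_rhs)
  show "((\<lambda>z. rho \<mu> z ^ n) has_derivative (\<lambda>h. of_nat n * (rho \<mu> x * \<mu> * (x \<bullet> h) / (2 * phi \<mu> x)) * rho \<mu> x ^ (n - 1))) (at x)"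
    by (rule has_derivative_power[OF has_derivative_rho[OF assms]])
  show "(\<lambda>h. of_nat n * (rho \<mu> x * \<mu> * (x \<bullet> h) / (2 * phi \<mu> x)) * rho \<mu> x ^ (n - 1))
      = (\<lambda>h. n * \<mu> * (x \<bullet> h) / (2 * phi \<mu> x) * rho \<mu> x ^ n)"
    by (cases n) (simp_all add: fun_eq_iff)
qed

lemma has_derivative_vec_nth: "((\<lambda>z::real^'n. z $ l) has_derivative (\<lambda>h. h $ l)) F"
  by (rule bounded_linear_imp_has_derivative[OF bounded_linear_vec_nth])

lemma has_derivative_alpha_bar:
  assumes "phi \<mu> x > 0"
  shows "((\<lambda>z. alpha_bar \<mu> z $ l $ m) has_derivative (\<lambda>h.
      ((if l = m then 2 * \<mu> * (x \<bullet> h) else 0) - \<mu> * (h $ l * x $ m + x $ l * h $ m)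
       - ((if l = m then phi \<mu> x else 0) - \<mu> * x $ l * x $ m) * 3 * \<mu> * (x \<bullet> h) / phi \<mu> x)
      / rho \<mu> x ^ 6)) (at x)"
proof -
  have numerator: "((\<lambda>z. (if l = m then phi \<mu> z else 0) - \<mu> * z $ l * z $ m) has_derivative
      (\<lambda>h. (if l = m then 2 * \<mu> * (x \<bullet> h) else 0) - \<mu> * (h $ l * x $ m + x $ l * h $ m))) (at x)"
  proof (rule has_derivative_diff)
    show "((\<lambda>z. if l = m then phi \<mu> z else 0) has_derivative (\<lambda>h. if l = m then 2 * \<mu> * (x \<bullet> h) else 0)) (at x)"
      by (cases "l = m") (simp_all add: has_derivative_phi)
    show "((\<lambda>z. \<mu> * z $ l * z $ m) has_derivative (\<lambda>h. \<mu> * (h $ l * x $ m + x $ l * h $ m))) (at x)"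
      by (rule has_derivative_eq_rhs, (rule derivative_intros has_derivative_vec_nth)+)
        (auto simp: algebra_simps)
  qed
  have "((\<lambda>z. ((if l = m then phi \<mu> z else 0) - \<mu> * z $ l * z $ m) / rho \<mu> z ^ 6) has_derivative (\<lambda>h.
      ((if l = m then 2 * \<mu> * (x \<bullet> h) else 0) - \<mu> * (h $ l * x $ m + x $ l * h $ m)
       - ((if l = m then phi \<mu> x else 0) - \<mu> * x $ l * x $ m) * 3 * \<mu> * (x \<bullet> h) / phi \<mu> x)
      / rho \<mu> x ^ 6)) (at x)"
    using rho_pos[OF assms] assms
    by (intro has_derivative_eq_rhs[OF has_derivative_divide[OF numerator has_derivative_rho_power[OF assms]]])
      (auto simp: fun_eq_iff field_simps)
  then show ?thesis by (simp add: alpha_bar_def)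
qed

lemma has_derivative_beta_bar:
  assumes "phi \<mu> x > 0"
  shows "((\<lambda>z. beta_bar \<mu> lam z $ i) has_derivative
      (\<lambda>h. lam * (h $ i - 5 * \<mu> * x $ i * (x \<bullet> h) / (2 * phi \<mu> x)) / rho \<mu> x ^ 5)) (at x)"
proof -
  have "((\<lambda>z. lam * z $ i / rho \<mu> z ^ 5) has_derivative
      (\<lambda>h. lam * (h $ i - 5 * \<mu> * x $ i * (x \<bullet> h) / (2 * phi \<mu> x)) / rho \<mu> x ^ 5)) (at x)"
    using rho_pos[OF assms] assms
    by (intro has_derivative_eq_rhs[OF has_derivative_divide[OF _ has_derivative_rho_power[OF assms]]])
      (auto intro!: derivative_intros has_derivative_vec_nth simp: fun_eq_iff field_simps)
  then show ?thesis by (simp add: beta_bar_def)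
qed

lemma alpha_bar_inv_mult_x:
  "alpha_bar_inv \<mu> x *v x = (phi \<mu> x * rho \<mu> x ^ 2) *\<^sub>R x"
  "x v* alpha_bar_inv \<mu> x = (phi \<mu> x * rho \<mu> x ^ 2) *\<^sub>R x"
  by (simp_all add: vec_eq_iff alpha_bar_inv_def phi_def matrix_vector_mult_def vector_matrix_mult_def
      index_sum_simps)

lemma alpha_bar_inv_mult_comb:
  "(\<Sum>l\<in>UNIV. alpha_bar_inv \<mu> x $ i $ l * (p * y $ l + q * x $ l))
     = rho \<mu> x ^ 2 * (p * y $ i + (q * phi \<mu> x + \<mu> * p * (x \<bullet> y)) * x $ i)"
  by (simp add: alpha_bar_inv_def phi_def index_sum_simps)

lemma beta_entry_derivative:
  assumes b_eq: "\<And>x. x \<in> ball_mu \<mu> \<Longrightarrow> b x = beta_bar \<mu> lam x" and x: "x \<in> ball_mu \<mu>"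
  shows "(\<lambda>z. b z $ i) differentiable (at x)"
    and "pd (\<lambda>z. b z $ i) j x
      = lam * ((if i = j then 1 else 0) - 5 * \<mu> * x $ i * x $ j / (2 * phi \<mu> x)) / rho \<mu> x ^ 5"
proof -
  have derivative: "((\<lambda>z. b z $ i) has_derivative
      (\<lambda>h. lam * (h $ i - 5 * \<mu> * x $ i * (x \<bullet> h) / (2 * phi \<mu> x)) / rho \<mu> x ^ 5)) (at x)"
    by (rule has_derivative_transform_within_open[OF has_derivative_beta_bar[OF phi_pos[OF x]] open_ball_mu x])
      (simp add: b_eq)
  then show "(\<lambda>z. b z $ i) differentiable (at x)"
    by (rule differentiableI)
  show "pd (\<lambda>z. b z $ i) j x
      = lam * ((if i = j then 1 else 0) - 5 * \<mu> * x $ i * x $ j / (2 * phi \<mu> x)) / rho \<mu> x ^ 5"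
    unfolding pd_def frechet_derivative_at[OF derivative, symmetric]
    by (simp add: inner_axis) (simp add: axis_def)
qed

context
  fixes \<mu> :: real and a :: "real^'n \<Rightarrow> real^'n^'n"
  assumes metric_eq: "\<And>x. x \<in> ball_mu \<mu> \<Longrightarrow> a x = alpha_bar \<mu> x"
begin

lemma metric_entry_derivative:
  assumes x: "x \<in> ball_mu \<mu>"
  shows "(\<lambda>z. a z $ l $ m) differentiable (at x)"
    and "pd (\<lambda>z. a z $ l $ m) k x = cubic_tensor (- \<mu> / rho \<mu> x ^ 6) (3 * \<mu>^2 / (phi \<mu> x * rho \<mu> x ^ 6)) x l m k"
proof -
  note phi = phi_pos[OF x]
  have "((\<lambda>z. a z $ l $ m) has_derivative (\<lambda>h.
      ((if l = m then 2 * \<mu> * (x \<bullet> h) else 0) - \<mu> * (h $ l * x $ m + x $ l * h $ m)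
       - ((if l = m then phi \<mu> x else 0) - \<mu> * x $ l * x $ m) * 3 * \<mu> * (x \<bullet> h) / phi \<mu> x)
      / rho \<mu> x ^ 6)) (at x)"
    by (rule has_derivative_transform_within_open[OF has_derivative_alpha_bar[OF phi] open_ball_mu x])
      (simp add: metric_eq)
  note derivative = this
  then show "(\<lambda>z. a z $ l $ m) differentiable (at x)"
    by (rule differentiableI)
  show "pd (\<lambda>z. a z $ l $ m) k x = cubic_tensor (- \<mu> / rho \<mu> x ^ 6) (3 * \<mu>^2 / (phi \<mu> x * rho \<mu> x ^ 6)) x l m k"
    unfolding pd_def frechet_derivative_at[OF derivative, symmetric]
    using phi rho_pos[OF phi]
    by (simp add: inner_axis cubic_tensor_def) (auto simp: axis_def field_simps power2_eq_square)
qed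

lemma riemannian_metric_on_ball_mu: "riemannian_metric_on (ball_mu \<mu>) a"
  unfolding riemannian_metric_on_def
proof (intro conjI ballI allI impI open_ball_mu)
  fix x :: "real^'n" and y :: "real^'n" and i j
  assume x: "x \<in> ball_mu \<mu>"
  show "a x $ i $ j = a x $ j $ i"
    by (simp add: metric_eq[OF x] alpha_bar_def mult_ac)
  show "(\<lambda>z. a z $ i $ j) differentiable (at x)"
    by (rule metric_entry_derivative(1)[OF x])
  assume "y \<noteq> 0"
  then show "alpha_sq a x y > 0"
    using phi_quadratic_pos[OF phi_pos[OF x]] rho_pos[OF phi_pos[OF x]]
    by (simp add: alpha_sq_def metric_eq[OF x] alpha_bar_quadratic_form)
qed

lemma dually_flat_on_ball_mu: "dually_flat_on (ball_mu \<mu>) a"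
  unfolding dually_flat_on_def
proof (intro conjI riemannian_metric_on_ball_mu ballI allI)
  fix x y :: "real^'n" and l
  assume x: "x \<in> ball_mu \<mu>"
  show "(\<Sum>k\<in>UNIV. pdx (pdy (alpha_sq a) l) k x y * y $ k) - 2 * pdx (alpha_sq a) l x y = 0"
    by (rule dually_flat_condition_if_totally_symmetric[OF metric_entry_derivative[OF x]
          cubic_tensor_swap12 cubic_tensor_swap23])
qed

lemma spray_form_ball_mu: "spray_form (ball_mu \<mu>) a (theta_bar \<mu>)"
  unfolding spray_form_def
proof (intro ballI allI)
  fix x y :: "real^'n" and i
  assume x: "x \<in> ball_mu \<mu>"
  note phi = phi_pos[OF x] and rho = rho_pos[OF phi_pos[OF x]] and rho4 = rho_pow4[OF phi_pos[OF x]]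
  define c1 where "c1 = - \<mu> / rho \<mu> x ^ 6"
  define c3 where "c3 = 3 * \<mu>^2 / (phi \<mu> x * rho \<mu> x ^ 6)"
  define p where "p = 2 * c1 * (x \<bullet> y)"
  define q where "q = c1 * (y \<bullet> y) + c3 * (x \<bullet> y)^2"
  have "spray a i x y = 1/4 * (\<Sum>l\<in>UNIV. alpha_bar_inv \<mu> x $ i $ l * (p * y $ l + q * x $ l))"
    unfolding spray_if_totally_symmetric[OF metric_entry_derivative(2)[OF x] cubic_tensor_swap12 cubic_tensor_swap23]
      cubic_tensor_contract_yy inv_metric_def metric_eq[OF x] matrix_inv_alpha_bar[OF phi] p_def q_def c1_def c3_def
    by (simp add: algebra_simps)
  also have "\<dots> = rho \<mu> x ^ 2 / 4 * p * y $ i + rho \<mu> x ^ 2 / 4 * (q * phi \<mu> x + \<mu> * p * (x \<bullet> y)) * x $ i"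
    unfolding alpha_bar_inv_mult_comb by (simp add: algebra_simps)
  also have "rho \<mu> x ^ 2 / 4 * p = 2 * (theta_bar \<mu> x \<bullet> y)"
    using phi rho by (simp flip: rho4 add: p_def c1_def theta_bar_def field_simps)
  also have "q * phi \<mu> x + \<mu> * p * (x \<bullet> y) = - \<mu> * alpha_sq a x y"
    using phi rho
    by (simp add: q_def p_def c1_def c3_def alpha_sq_def metric_eq[OF x] alpha_bar_quadratic_form field_simps power2_eq_square)
  also have "inv_metric a x *v theta_bar \<mu> x = (- \<mu> * rho \<mu> x ^ 2 / 4) *\<^sub>R x"
    using phi unfolding inv_metric_def metric_eq[OF x] matrix_inv_alpha_bar[OF phi] theta_bar_def
      matrix_vector_mult_scaleR alpha_bar_inv_mult_x
    by simp
  then have "rho \<mu> x ^ 2 / 4 * (- \<mu> * alpha_sq a x y) * x $ i = alpha_sq a x y * (inv_metric a x *v theta_bar \<mu> x) $ i"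
    by simp
  finally show "spray a i x y = 2 * (theta_bar \<mu> x \<bullet> y) * y $ i + alpha_sq a x y * (inv_metric a x *v theta_bar \<mu> x) $ i" .
qed

lemma cov_deriv_ball_mu:
  assumes b_eq: "\<And>x. x \<in> ball_mu \<mu> \<Longrightarrow> b x = beta_bar \<mu> lam x" and x: "x \<in> ball_mu \<mu>"
  shows "cov_deriv a b i j x
    = 2 * theta_bar \<mu> x $ i * b x $ j + lam * (1 + phi \<mu> x) / (2 * rho \<mu> x ^ 3) * a x $ i $ j"
proof -
  note phi = phi_pos[OF x] and rho = rho_pos[OF phi_pos[OF x]] and rho4 = rho_pow4[OF phi_pos[OF x]]
  define c1 where "c1 = - \<mu> / rho \<mu> x ^ 6"
  define c3 where "c3 = 3 * \<mu>^2 / (phi \<mu> x * rho \<mu> x ^ 6)"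
  define \<delta> :: real where "\<delta> = (if i = j then 1 else 0)"
  have pd_b: "pd (\<lambda>z. b z $ i) j x = lam * (\<delta> - 5 * \<mu> * x $ i * x $ j / (2 * phi \<mu> x)) / rho \<mu> x ^ 5"
    unfolding \<delta>_def by (rule beta_entry_derivative(2)[OF b_eq x])
  have b_inv: "b x v* inv_metric a x = (lam * rho \<mu> x) *\<^sub>R x"
    using rho
    by (simp add: b_eq[OF x] beta_bar_def inv_metric_def metric_eq[OF x] matrix_inv_alpha_bar[OF phi]
        scaleR_vector_matrix_assoc alpha_bar_inv_mult_x flip: rho4) (simp add: field_simps eval_nat_numeral)
  have "cov_deriv a b i j x = lam * (\<delta> - 5 * \<mu> * x $ i * x $ j / (2 * phi \<mu> x)) / rho \<mu> x ^ 5
      - lam * rho \<mu> x / 2 * (2 * c1 * x $ i * x $ j + c1 * (x \<bullet> x) * \<delta> + c3 * (x \<bullet> x) * x $ i * x $ j)"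
  proof -
    have "(\<Sum>l\<in>UNIV. ((lam * rho \<mu> x) *\<^sub>R x) $ l * cubic_tensor c1 c3 x l i j)
        = lam * rho \<mu> x * (\<Sum>l\<in>UNIV. x $ l * cubic_tensor c1 c3 x l i j)"
      by (simp add: sum_distrib_left mult_ac)
    then show ?thesis
      unfolding cov_deriv_if_totally_symmetric[OF metric_entry_derivative(2)[OF x, folded c1_def c3_def]
          cubic_tensor_swap12 cubic_tensor_swap23] pd_b b_inv cubic_tensor_contract_x \<delta>_def
      by simp
  qed
  also have "\<dots> = 2 * theta_bar \<mu> x $ i * b x $ j + lam * (1 + phi \<mu> x) / (2 * rho \<mu> x ^ 3) * a x $ i $ j"
  proof -
    have mu_xx: "\<mu> * (x \<bullet> x) = rho \<mu> x ^ 4 - 1"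
      by (simp add: rho4 phi_def)
    have c1_xx: "c1 * (x \<bullet> x) = - ((rho \<mu> x ^ 4 - 1) / rho \<mu> x ^ 6)"
      by (simp add: c1_def mu_xx)
    have "c3 * (x \<bullet> x) = 3 * \<mu> * (\<mu> * (x \<bullet> x)) / (rho \<mu> x ^ 4 * rho \<mu> x ^ 6)"
      by (simp add: c3_def rho4 power2_eq_square)
    also have "\<dots> = 3 * \<mu> * (rho \<mu> x ^ 4 - 1) / rho \<mu> x ^ 10"
      unfolding mu_xx by (simp flip: power_add)
    finally have c3_xx: "c3 * (x \<bullet> x) = 3 * \<mu> * (rho \<mu> x ^ 4 - 1) / rho \<mu> x ^ 10" .
    have a_ij: "a x $ i $ j = (\<delta> * rho \<mu> x ^ 4 - \<mu> * x $ i * x $ j) / rho \<mu> x ^ 6"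
      by (simp add: metric_eq[OF x] alpha_bar_def \<delta>_def rho4)
    show ?thesis
      unfolding c1_xx c3_xx a_ij
      using rho
      by (simp add: c1_def theta_bar_def b_eq[OF x] beta_bar_def flip: rho4) (simp add: field_simps, algebra)
  qed
  finally show ?thesis .
qed

lemma dually_related_on_ball_mu:
  assumes b_eq: "\<And>x. x \<in> ball_mu \<mu> \<Longrightarrow> b x = beta_bar \<mu> lam x"
  shows "dually_related_on (ball_mu \<mu>) a b"
  unfolding dually_related_on_def
proof (intro conjI dually_flat_on_ball_mu ballI allI exI[of _ "theta_bar \<mu>"]
    exI[of _ "\<lambda>x. lam * (1 + phi \<mu> x) / (2 * rho \<mu> x ^ 3)"] spray_form_ball_mu)
  fix x :: "real^'n" and i j
  assume x: "x \<in> ball_mu \<mu>"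
  show "(\<lambda>z. b z $ i) differentiable (at x)"
    by (rule beta_entry_derivative(1)[OF b_eq x])
  show "cov_deriv a b i j x = 2 * theta_bar \<mu> x $ i * b x $ j + lam * (1 + phi \<mu> x) / (2 * rho \<mu> x ^ 3) * a x $ i $ j"
    by (rule cov_deriv_ball_mu[OF b_eq x])
qed

end

theorem mainTheorem4:
  fixes \<mu> lam :: real
    and a :: "real^'n \<Rightarrow> real^'n^'n"
    and b :: "real^'n \<Rightarrow> real^'n"
  assumes a_sym: "\<forall>x\<in>ball_mu \<mu>. \<forall>i j. a x $ i $ j = a x $ j $ i"
    and a_alpha: "\<forall>x\<in>ball_mu \<mu>. \<forall>y. sqrt (alpha_sq a x y) =
        sqrt ((1 + \<mu> * (norm x)\<^sup>2) * (norm y)\<^sup>2 - \<mu> * (x \<bullet> y)\<^sup>2) / (1 + \<mu> * (norm x)\<^sup>2) powr (3/4)"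
    and b_beta: "\<forall>x\<in>ball_mu \<mu>. \<forall>y. b x \<bullet> y = lam * (x \<bullet> y) / (1 + \<mu> * (norm x)\<^sup>2) powr (5/4)"
  shows "dually_flat_on (ball_mu \<mu>) a \<and> dually_related_on (ball_mu \<mu>) a b"
proof -
  have metric_eq: "a x = alpha_bar \<mu> x" if "x \<in> ball_mu \<mu>" for x
    using that a_sym a_alpha by (intro alpha_bar_unique phi_pos) auto
  have b_eq: "b x = beta_bar \<mu> lam x" if "x \<in> ball_mu \<mu>" for x
    using that b_beta by (intro beta_bar_unique phi_pos) auto
  show ?thesis
    using dually_flat_on_ball_mu[OF metric_eq] dually_related_on_ball_mu[OF metric_eq b_eq] by blast
qed

end
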